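(* Let $p,q>0$ and $\alpha,\beta,\nu,\gamma\in\mathbb{R}$ with $\nu\ln p\neq\alpha\ln q$ (equivalently $p^\nu\neq q^\alpha$). Define for $n\in\mathbb{N}$ $$f(n)=q^{\beta}\left(\frac{p^{n\nu}-q^{n\alpha}}{p^{\nu}-q^{\alpha}}+2\gamma\,\frac{p^{n\nu}-(-1)^{n}q^{n\alpha}}{p^{\nu}+q^{\alpha}}\right).$$ Then $f(n)>0$ for all integers $n\geq 1$ provided that $-2\gamma<1$ in the case $\nu\ln p>\alpha\ln q$, and $-1<2\gamma<-\dfrac{p^{\nu}+q^{\alpha}}{p^{\nu}-q^{\alpha}}$ in the case $\nu\ln p<\alpha\ln q$.
   Context: $f$ is the structure function of the $(p,q;\alpha,\beta,\nu;\gamma)$-deformed oscillator algebra (defined by $aa^{\dagger}-p^{\nu}a^{\dagger}a=(1+2\gamma K)q^{\alpha N+\beta}$, $[N,a]=-a$, $[N,a^\dagger]=a^\dagger$, $Ka=-aK$, $Ka^\dagger=-a^\dagger K$, $[N,K]=0$) in the case $p^\nu\neq q^\alpha$; note $f(0)=0$. *)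

theory Defs
  imports Complex_Main
begin

definition f_struct :: "real \<Rightarrow> real \<Rightarrow> real \<Rightarrow> real \<Rightarrow> real \<Rightarrow> real \<Rightarrow> nat \<Rightarrow> real" where
  "f_struct p q \<alpha> \<beta> \<nu> \<gamma> n =
     q powr \<beta> * ((p powr (real n * \<nu>) - q powr (real n * \<alpha>)) / (p powr \<nu> - q powr \<alpha>)
       + 2 * \<gamma> * (p powr (real n * \<nu>) - (-1) ^ n * q powr (real n * \<alpha>)) / (p powr \<nu> + q powr \<alpha>))"

end

theory Submission
  imports Defs
begin

text \<open>Put \<open>a = p powr \<nu>\<close>, \<open>b = q powr \<alpha>\<close> and \<open>g = 2\<gamma>\<close>; then \<open>f n = q powr \<beta> * (S + g T)\<close>
  with \<open>S = \<Sum>k<n. a^k b^(n-1-k)\<close> and \<open>T = \<Sum>k<n. a^k (-b)^(n-1-k)\<close>.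
  Hence \<open>S > 0\<close>, \<open>|T| \<le> S\<close>, and \<open>T \<ge> 0\<close> unless \<open>n\<close> is even and \<open>a < b\<close>;
  so \<open>S + g T \<ge> (1 + min 0 g) S > 0\<close> whenever \<open>g > -1\<close>. In the remaining case
  \<open>S + g T = (a^n - b^n) (1/(a - b) + g/(a + b))\<close> is a product of two negative factors,
  which is exactly what the upper bound on \<open>g\<close> guarantees.\<close>

lemma diff_power_quotient_eq_sum:
  fixes x y :: "'a::field"
  assumes "x \<noteq> y"
  shows "(x ^ n - y ^ n) / (x - y) = (\<Sum>k<n. y ^ (n - Suc k) * x ^ k)"
  using assms by (simp add: power_diff_sumr2)

lemma diff_power_quotient_pos:
  fixes a b :: real
  assumes "0 < a" "0 < b" "a \<noteq> b" "1 \<le> n"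
  shows "0 < (a ^ n - b ^ n) / (a - b)"
proof -
  have "0 < (\<Sum>k<n. b ^ (n - Suc k) * a ^ k)"
    using assms by (intro sum_pos) (auto simp: lessThan_empty_iff)
  then show ?thesis
    using assms(3) by (simp add: diff_power_quotient_eq_sum)
qed

lemma abs_alt_power_quotient_le:
  fixes a b :: real
  assumes "0 \<le> a" "0 \<le> b" "a \<noteq> b"
  shows "\<bar>(a ^ n - (-1) ^ n * b ^ n) / (a + b)\<bar> \<le> (a ^ n - b ^ n) / (a - b)"
proof -
  have "a \<noteq> - b"
    using assms by linarith
  then have "(a ^ n - (-1) ^ n * b ^ n) / (a + b) = (\<Sum>k<n. (- b) ^ (n - Suc k) * a ^ k)"
    using diff_power_quotient_eq_sum[of a "- b" n] by (simp add: power_minus')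
  also have "\<bar>\<dots>\<bar> \<le> (\<Sum>k<n. \<bar>(- b) ^ (n - Suc k) * a ^ k\<bar>)"
    by (rule sum_abs)
  also have "\<dots> = (\<Sum>k<n. b ^ (n - Suc k) * a ^ k)"
    using assms by (simp add: abs_mult power_abs)
  also have "\<dots> = (a ^ n - b ^ n) / (a - b)"
    using assms(3) by (simp add: diff_power_quotient_eq_sum)
  finally show ?thesis .
qed

lemma alt_power_quotient_nonneg:
  fixes a b :: real
  assumes "0 \<le> a" "0 \<le> b" "odd n \<or> b \<le> a"
  shows "0 \<le> (a ^ n - (-1) ^ n * b ^ n) / (a + b)"
proof -
  have "(-1) ^ n * b ^ n \<le> a ^ n"
  proof (cases "even n")
    case True
    then show ?thesis
      using assms by (auto intro: power_mono)
  next
    case False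
    moreover have "0 \<le> a ^ n" and "0 \<le> b ^ n"
      using assms by simp_all
    ultimately show ?thesis
      by simp
  qed
  then show ?thesis
    using assms by simp
qed

lemma deformed_power_quotient_pos:
  fixes a b g :: real
  assumes a: "0 < a" and b: "0 < b" and ab: "a \<noteq> b" and n: "1 \<le> n"
    and g_lower: "-1 < g" and g_upper: "a < b \<longrightarrow> g < - (a + b) / (a - b)"
  shows "0 < (a ^ n - b ^ n) / (a - b) + g * (a ^ n - (-1) ^ n * b ^ n) / (a + b)"
proof (cases "even n \<and> a < b")
  case True
  have "a ^ n < b ^ n"
    using True a n by (intro power_strict_mono) auto
  moreover have "1 / (a - b) + g / (a + b) < 0"
  proof -
    have "a - b < 0" and "0 < a + b"
      using True a b by auto
    moreover have "- (a + b) < g * (a - b)"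
      using True g_upper \<open>a - b < 0\<close> by (simp add: less_divide_eq)
    moreover have "1 / (a - b) + g / (a + b) = (a + b + g * (a - b)) / ((a - b) * (a + b))"
      using \<open>a - b < 0\<close> \<open>0 < a + b\<close> by (simp add: field_simps)
    ultimately show ?thesis
      by (simp add: divide_pos_neg mult_neg_pos)
  qed
  moreover have "(a ^ n - b ^ n) / (a - b) + g * (a ^ n - (-1) ^ n * b ^ n) / (a + b)
      = (a ^ n - b ^ n) * (1 / (a - b) + g / (a + b))"
    using True a b by (simp add: field_simps)
  ultimately show ?thesis
    by (simp add: mult_neg_neg)
next
  case False
  define S where "S = (a ^ n - b ^ n) / (a - b)"
  define T where "T = (a ^ n - (-1) ^ n * b ^ n) / (a + b)"
  have "0 < S"
    unfolding S_def using a b ab n by (rule diff_power_quotient_pos)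
  have "0 \<le> T"
    unfolding T_def using False ab a b by (intro alt_power_quotient_nonneg) auto
  have "T \<le> S"
    unfolding S_def T_def using ab a b abs_alt_power_quotient_le[of a b n] by linarith
  have "0 < S + g * T"
  proof (cases "0 \<le> g")
    case True
    then show ?thesis
      using \<open>0 < S\<close> \<open>0 \<le> T\<close> by (simp add: add_pos_nonneg)
  next
    case False
    then have "g * S \<le> g * T"
      using \<open>T \<le> S\<close> by (simp add: mult_left_mono_neg)
    moreover have "0 < (1 + g) * S"
      using g_lower \<open>0 < S\<close> by simp
    ultimately show ?thesis
      by (simp add: algebra_simps)
  qed
  then show ?thesis
    unfolding S_def T_def by simp
qed

theorem proposition2:
  fixes p q \<alpha> \<beta> \<nu> \<gamma> :: real
  assumes "p > 0" and "q > 0"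
    and "\<nu> * ln p \<noteq> \<alpha> * ln q"
    and "\<nu> * ln p > \<alpha> * ln q \<longrightarrow> -2 * \<gamma> < 1"
    and "\<nu> * ln p < \<alpha> * ln q \<longrightarrow>
           -1 < 2 * \<gamma> \<and> 2 * \<gamma> < - (p powr \<nu> + q powr \<alpha>) / (p powr \<nu> - q powr \<alpha>)"
  shows "\<forall>n::nat. n \<ge> 1 \<longrightarrow> f_struct p q \<alpha> \<beta> \<nu> \<gamma> n > 0"
proof (intro allI impI)
  fix n :: nat
  assume n: "n \<ge> 1"
  define a where "a = p powr \<nu>"
  define b where "b = q powr \<alpha>"
  have a: "0 < a" and b: "0 < b"
    using assms(1,2) unfolding a_def b_def by auto
  have "ln a = \<nu> * ln p" and "ln b = \<alpha> * ln q"
    unfolding a_def b_def by simp_all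
  then have less_iff: "a < b \<longleftrightarrow> \<nu> * ln p < \<alpha> * ln q" and ab: "a \<noteq> b"
    using a b assms(3) ln_less_cancel_iff[OF a b] by auto
  have "-1 < 2 * \<gamma>" and "a < b \<longrightarrow> 2 * \<gamma> < - (a + b) / (a - b)"
    using assms(3-5) less_iff unfolding a_def b_def by auto
  then have "0 < (a ^ n - b ^ n) / (a - b) + 2 * \<gamma> * (a ^ n - (-1) ^ n * b ^ n) / (a + b)"
    using deformed_power_quotient_pos a b ab n by blast
  moreover have "p powr (real n * \<nu>) = a ^ n" and "q powr (real n * \<alpha>) = b ^ n"
    using assms(1,2) unfolding a_def b_def by (simp_all add: powr_power)
  ultimately show "f_struct p q \<alpha> \<beta> \<nu> \<gamma> n > 0"
    unfolding f_struct_def a_def b_def using assms(2) by simp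
qed

end
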